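(* Let $H\in\mathbb{C}^{N\times N}$ be an orthogonal projector, $|\psi_0\rangle$ a unit vector, $\psi_0=|\psi_0\rangle\langle\psi_0|$, $X_0:=[H,\psi_0]$ and $Y_0:=i[H,X_0]$. For $(x,y)\in\mathbb{R}^2$ set $A:=\operatorname{atan2}(y,x)$, $R:=\sqrt{x^2+y^2}$, $a_1=A+\tfrac{\pi}{2}$, $a_2=A-\tfrac{\pi}{2}$, $b_1=-\tfrac{R}{2}$, $b_2=\tfrac{R}{2}$, and for $t\ge 0$ define \[\gamma(t;x,y)=e^{ia_1H}\,e^{itb_1\psi_0}\,e^{i(a_2-a_1)H}\,e^{itb_2\psi_0}\,e^{-ia_2H}.\] Then: (P1) $\gamma(t;x,y)$ is a product of factors of the form $e^{i\theta H}$ or $e^{i\theta\psi_0}$ with $\theta\in\mathbb{R}$; (P2) $\gamma(0;x,y)=I$; (P3) $\frac{d}{dt}\gamma(t;x,y)\big|_{t=0}=xX_0+yY_0$. Consequently, for $U\in\mathrm{U}(N)$ and $\eta=(xX_0+yY_0)U$, the length-5 product retraction $\mathrm{R}^{(5)}_U(t\eta):=\gamma(t;x,y)\,U$ satisfies $\mathrm{R}^{(5)}_U(0)=U$ and $\frac{d}{dt}\mathrm{R}^{(5)}_U(t\eta)|_{t=0}=\eta$.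
   Context: $\operatorname{atan2}(y,x)$ is the standard two-argument arctangent (for $(x,y)=(0,0)$, $R=0$ and any value of $A$ may be used). $\mathrm{U}(N)$ is the unitary group. *)

theory Defs
  imports "HOL-Analysis.Analysis"
begin

definition cscale :: "complex \<Rightarrow> complex^'n^'m \<Rightarrow> complex^'n^'m" where
  "cscale c A = (\<chi> i j. c * A $ i $ j)"

definition adj :: "complex^'n^'m \<Rightarrow> complex^'m^'n" where
  "adj A = (\<chi> i j. cnj (A $ j $ i))"

primrec matpow :: "complex^'n^'n \<Rightarrow> nat \<Rightarrow> complex^'n^'n" where
  "matpow A 0 = mat 1"
| "matpow A (Suc k) = A ** matpow A k"

definition mexp :: "complex^'n^'n \<Rightarrow> complex^'n^'n" where
  "mexp A = (\<Sum>k. (1 / fact k) *\<^sub>R matpow A k)"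

definition commutator :: "complex^'n^'n \<Rightarrow> complex^'n^'n \<Rightarrow> complex^'n^'n" where
  "commutator A B = A ** B - B ** A"

definition orth_projector :: "complex^'n^'n \<Rightarrow> bool" where
  "orth_projector H \<longleftrightarrow> H ** H = H \<and> adj H = H"

definition unitary :: "complex^'n^'n \<Rightarrow> bool" where
  "unitary U \<longleftrightarrow> U ** adj U = mat 1 \<and> adj U ** U = mat 1"

definition ketbra :: "complex^'n \<Rightarrow> complex^'n^'n" where
  "ketbra v = (\<chi> i j. v $ i * cnj (v $ j))"

text \<open>Standard two-argument arctangent, values in (-pi, pi]; atan2 0 0 = 0.\<close>
definition atan2 :: "real \<Rightarrow> real \<Rightarrow> real" where
  "atan2 y x =
     (if x > 0 then arctan (y / x)
      else if x < 0 \<and> y \<ge> 0 then arctan (y / x) + pi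
      else if x < 0 \<and> y < 0 then arctan (y / x) - pi
      else if y > 0 then pi / 2
      else if y < 0 then - pi / 2
      else 0)"

definition gamma5 :: "complex^'n^'n \<Rightarrow> complex^'n^'n \<Rightarrow> real \<Rightarrow> real \<Rightarrow> real \<Rightarrow> complex^'n^'n" where
  "gamma5 H P t x y =
     (let A = atan2 y x; R = sqrt (x^2 + y^2);
          a1 = A + pi / 2; a2 = A - pi / 2; b1 = - R / 2; b2 = R / 2
      in mexp (cscale (\<i> * complex_of_real a1) H)
         ** mexp (cscale (\<i> * complex_of_real (t * b1)) P)
         ** mexp (cscale (\<i> * complex_of_real (a2 - a1)) H)
         ** mexp (cscale (\<i> * complex_of_real (t * b2)) P)
         ** mexp (cscale (- \<i> * complex_of_real a2) H))"

definition factor_prod :: "complex^'n^'n \<Rightarrow> complex^'n^'n \<Rightarrow> (bool \<times> real) list \<Rightarrow> complex^'n^'n" where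
  "factor_prod H P fs =
     foldr (\<lambda>(b, \<theta>) M. mexp (cscale (\<i> * complex_of_real \<theta>) (if b then H else P)) ** M) fs (mat 1)"

definition retr5 :: "complex^'n^'n \<Rightarrow> complex^'n^'n \<Rightarrow> complex^'n^'n \<Rightarrow> real \<Rightarrow> real \<Rightarrow> real \<Rightarrow> complex^'n^'n" where
  "retr5 H P U t x y = gamma5 H P t x y ** U"

end

theory Submission
  imports Defs
begin

(* Both H and psi_0 are idempotent, so e^{i theta Q} = 1 + (e^{i theta} - 1) Q for Q in {H, psi_0},
   and the H-phases form a one-parameter group. Hence the three H-factors of gamma multiply to the
   identity (P2), and the product rule gives
     gamma'(0) = i b1 e^{i a1 H} psi_0 e^{-i a1 H} + i b2 e^{i a2 H} psi_0 e^{-i a2 H}.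
   Conjugation by e^{i a H} keeps the block-diagonal part of psi_0 and multiplies its off-diagonal
   blocks K = H psi_0 (1 - H) and K' = (1 - H) psi_0 H by e^{i a} and e^{-i a}. For a = A +- pi/2
   the diagonal parts cancel and, as R e^{i A} = x + i y,
     gamma'(0) = (x + i y) K - (x - i y) K' = x (K - K') + i y (K + K') = x X0 + y Y0,
   because [H, psi_0] = K - K' and [H, [H, psi_0]] = K + K'. *)

lemma cscale_matrix_mult_left: "cscale c A ** B = cscale c (A ** B)"
  by (simp add: vec_eq_iff cscale_def matrix_matrix_mult_def sum_distrib_left mult.assoc)

lemma cscale_matrix_mult_right: "A ** cscale c B = cscale c (A ** B)"
  by (simp add: vec_eq_iff cscale_def matrix_matrix_mult_def sum_distrib_left mult.left_commute)

lemma cscale_cscale: "cscale c (cscale d A) = cscale (c * d) A"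
  by (simp add: vec_eq_iff cscale_def mult.assoc)

lemma cscale_add_right: "cscale c (A + B) = cscale c A + cscale c B"
  by (simp add: vec_eq_iff cscale_def distrib_left)

lemma cscale_zero_left [simp]: "cscale 0 A = 0"
  by (simp add: vec_eq_iff cscale_def)

lemma cscale_one [simp]: "cscale 1 A = A"
  by (simp add: vec_eq_iff cscale_def)

lemma scaleR_eq_cscale: "r *\<^sub>R A = cscale (complex_of_real r) A"
  by (simp add: vec_eq_iff cscale_def) (simp add: scaleR_conv_of_real[where 'a = complex])

lemma matrix_add_rdistrib: "(A + B) ** C = A ** C + B ** C"
  by (simp add: vec_eq_iff matrix_matrix_mult_def distrib_right sum.distrib)

lemma bounded_linear_cscale_left: "bounded_linear (\<lambda>c. cscale c (A :: complex^'n^'m))"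
  unfolding linear_conv_bounded_linear[symmetric]
  by (rule linearI) (simp_all add: vec_eq_iff cscale_def distrib_right scaleR_conv_of_real[where 'a = complex])

lemma bounded_bilinear_matrix_mult:
  "bounded_bilinear (\<lambda>(A :: complex^'n^'m) (B :: complex^'p^'n). A ** B)"
  unfolding bilinear_conv_bounded_bilinear[symmetric] bilinear_def
  by (intro conjI allI linearI)
     (simp_all add: matrix_add_ldistrib matrix_add_rdistrib scalar_matrix_assoc matrix_scalar_ac)

lemma matrix_diff_ldistrib: "(A :: complex^'n^'m) ** (B - C) = A ** B - A ** C"
  by (simp add: vec_eq_iff matrix_matrix_mult_def sum_subtractf algebra_simps)

lemma matrix_diff_rdistrib: "(A - B) ** (C :: complex^'p^'n) = A ** C - B ** C"
  by (simp add: vec_eq_iff matrix_matrix_mult_def sum_subtractf algebra_simps)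

lemma matpow_cscale_idempotent:
  assumes "Q ** Q = Q"
  shows "matpow (cscale c Q) (Suc k) = cscale (c ^ Suc k) Q"
  by (induction k) (simp_all add: cscale_matrix_mult_left cscale_matrix_mult_right cscale_cscale assms mult_ac)

lemma mexp_cscale_idempotent:
  assumes "Q ** Q = Q"
  shows "mexp (cscale c Q) = mat 1 + cscale (exp c - 1) Q"
proof -
  have term_split: "(1 / fact k) *\<^sub>R matpow (cscale c Q) k
      = cscale (c ^ k /\<^sub>R fact k) Q + (if k = 0 then mat 1 - Q else 0)" for k
    by (cases k) (simp, simp add: matpow_cscale_idempotent[OF assms] scaleR_eq_cscale cscale_cscale
        scaleR_conv_of_real divide_inverse mult_ac del: matpow.simps)
  have "(\<lambda>k. cscale (c ^ k /\<^sub>R fact k) Q) sums cscale (exp c) Q"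
    using bounded_linear.sums[OF bounded_linear_cscale_left exp_converges] .
  moreover have "(\<lambda>k. if k = 0 then mat 1 - Q else 0) sums (mat 1 - Q)"
    using sums_single[of 0 "\<lambda>_. mat 1 - Q"] by simp
  ultimately have "(\<lambda>k. (1 / fact k) *\<^sub>R matpow (cscale c Q) k) sums (cscale (exp c) Q + (mat 1 - Q))"
    unfolding term_split by (rule sums_add)
  then have "mexp (cscale c Q) = cscale (exp c) Q + (mat 1 - Q)"
    unfolding mexp_def by (rule sums_unique[symmetric])
  then show ?thesis
    by (simp add: vec_eq_iff cscale_def algebra_simps)
qed

definition phase :: "complex^'n^'n \<Rightarrow> real \<Rightarrow> complex^'n^'n" where
  "phase Q \<theta> = mat 1 + cscale (cis \<theta> - 1) Q"

lemma mexp_eq_phase: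
  "Q ** Q = Q \<Longrightarrow> mexp (cscale (\<i> * complex_of_real \<theta>) Q) = phase Q \<theta>"
  by (simp add: mexp_cscale_idempotent phase_def cis_conv_exp)

lemma phase_0 [simp]: "phase Q 0 = mat 1"
  by (simp add: phase_def)

lemma phase_add:
  assumes "Q ** Q = Q"
  shows "phase Q a ** phase Q b = phase Q (a + b)"
proof -
  have "phase Q a ** phase Q b
      = mat 1 + cscale (cis b - 1) Q + cscale (cis a - 1) Q + cscale ((cis a - 1) * (cis b - 1)) Q"
    by (simp add: phase_def matrix_add_ldistrib matrix_add_rdistrib cscale_matrix_mult_left
        cscale_matrix_mult_right cscale_cscale cscale_add_right assms mult_ac)
  then show ?thesis
    by (simp add: phase_def vec_eq_iff cscale_def cis_mult[symmetric] algebra_simps)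
qed

lemma has_derivative_phase:
  "((\<lambda>t. phase Q (t * b)) has_derivative (\<lambda>s. s *\<^sub>R cscale (\<i> * complex_of_real b) Q)) (at 0 within S)"
proof -
  have "((\<lambda>t. cis (t * b) - 1) has_derivative (\<lambda>s. (s * b) *\<^sub>R (\<i> * cis (0 * b)) - 0)) (at 0 within S)"
    by (intro derivative_intros has_derivative_cis)
  then have "((\<lambda>t. mat 1 + cscale (cis (t * b) - 1) Q) has_derivative
      (\<lambda>s. 0 + cscale ((s * b) *\<^sub>R (\<i> * cis (0 * b)) - 0) Q)) (at 0 within S)"
    by (intro derivative_intros bounded_linear.has_derivative[OF bounded_linear_cscale_left])
  then show ?thesis
    unfolding phase_def
    by (rule has_derivative_eq_rhs) (simp add: fun_eq_iff scaleR_eq_cscale cscale_cscale scaleR_conv_of_real mult_ac)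
qed

lemma phase_conjugate:
  "phase H a ** M ** phase H (- a)
     = M - H ** M - M ** H + cscale 2 (H ** M ** H)
       + cscale (cis a) (H ** M - H ** M ** H) + cscale (cis (- a)) (M ** H - H ** M ** H)"
proof -
  have "phase H a ** M ** phase H (- a)
      = M + cscale (cis a - 1) (H ** M) + cscale (cis (- a) - 1) (M ** H)
        + cscale ((cis a - 1) * (cis (- a) - 1)) (H ** M ** H)"
    by (simp add: phase_def matrix_add_ldistrib matrix_add_rdistrib cscale_matrix_mult_left
        cscale_matrix_mult_right cscale_cscale cscale_add_right algebra_simps)
  moreover have "cis a * cis (- a) = 1"
    by (simp add: cis_mult)
  ultimately show ?thesis
    by (simp add: vec_eq_iff cscale_def algebra_simps)
qed

lemma has_derivative_phase_product:
  fixes H P :: "complex^'n^'n"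
  assumes "H ** H = H"
  shows "((\<lambda>t. phase H a ** phase P (t * b) ** phase H (c - a) ** phase P (t * d) ** phase H (- c))
    has_derivative (\<lambda>s. s *\<^sub>R (cscale (\<i> * complex_of_real b) (phase H a ** P ** phase H (- a))
                             + cscale (\<i> * complex_of_real d) (phase H c ** P ** phase H (- c)))))
    (at 0 within S)"
proof -
  have phase_sums: "phase H a ** phase H (c - a) = phase H c"
    "M ** phase H (c - a) ** phase H (- c) = M ** phase H (- a)" "phase H c ** phase H (- c) = mat 1"
    for M :: "complex^'n^'n"
    by (simp_all add: phase_add[OF assms] matrix_mul_assoc[symmetric])
  show ?thesis
    by (rule has_derivative_eq_rhs,
        (rule bounded_bilinear.FDERIV[OF bounded_bilinear_matrix_mult] has_derivative_const has_derivative_phase)+)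
      (simp add: fun_eq_iff matrix_add_ldistrib matrix_add_rdistrib scaleR_eq_cscale cscale_cscale
        cscale_matrix_mult_left cscale_matrix_mult_right cscale_add_right matrix_mul_assoc phase_sums
        add.commute)
qed

lemma phase_conjugate_quarter_turns:
  "cscale (\<i> * complex_of_real (- r / 2)) (phase H (A + pi / 2) ** M ** phase H (- (A + pi / 2)))
   + cscale (\<i> * complex_of_real (r / 2)) (phase H (A - pi / 2) ** M ** phase H (- (A - pi / 2)))
   = cscale (complex_of_real r * cis A) (H ** M - H ** M ** H)
     - cscale (complex_of_real r * cis (- A)) (M ** H - H ** M ** H)"
proof -
  have "cis (A + pi / 2) = \<i> * cis A" "cis (- (A + pi / 2)) = - \<i> * cis (- A)"
    "cis (A - pi / 2) = - \<i> * cis A" "cis (- (A - pi / 2)) = \<i> * cis (- A)"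
    by (simp_all add: complex_eq_iff cos_add sin_add cos_diff sin_diff)
  then show ?thesis
    unfolding phase_conjugate by (simp add: vec_eq_iff cscale_def algebra_simps)
qed

lemma commutator_eq_off_diagonal_diff:
  "commutator H M = (H ** M - H ** M ** H) - (M ** H - H ** M ** H)"
  by (simp add: commutator_def)

lemma commutator_commutator_idempotent:
  fixes H M :: "complex^'n^'n"
  assumes "H ** H = H"
  shows "commutator H (commutator H M) = (H ** M - H ** M ** H) + (M ** H - H ** M ** H)"
proof -
  have "M ** H ** H = M ** H"
    by (simp add: matrix_mul_assoc[symmetric] assms)
  then show ?thesis
    by (simp add: commutator_def matrix_diff_ldistrib matrix_diff_rdistrib matrix_mul_assoc assms)
qed

lemma cscale_conjugate_pair:
  "cscale (Complex x y) K - cscale (cnj (Complex x y)) L = x *\<^sub>R (K - L) + y *\<^sub>R cscale \<i> (K + L)"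
  by (simp add: vec_eq_iff cscale_def Complex_eq scaleR_conv_of_real[where 'a = complex] algebra_simps)

lemma atan2_polar:
  fixes x y :: real
  defines "R \<equiv> sqrt (x\<^sup>2 + y\<^sup>2)"
  shows "R * cos (atan2 y x) = x" and "R * sin (atan2 y x) = y"
proof -
  have "R * cos (atan2 y x) = x \<and> R * sin (atan2 y x) = y"
  proof (cases "x = 0")
    case True
    then show ?thesis unfolding R_def atan2_def by (auto simp: real_sqrt_abs)
  next
    case False
    then have "R > 0"
      unfolding R_def by (simp add: add_pos_nonneg)
    have "sqrt (1 + (y / x)\<^sup>2) = R / \<bar>x\<bar>"
      using False unfolding R_def by (intro real_sqrt_unique) (simp_all add: power_divide field_simps)
    then have "R * cos (arctan (y / x)) = \<bar>x\<bar>" "R * sin (arctan (y / x)) = y * \<bar>x\<bar> / x"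
      using False \<open>R > 0\<close> unfolding cos_arctan sin_arctan by (simp_all add: field_simps)
    then show ?thesis
      using False unfolding atan2_def by (cases "x > 0") auto
  qed
  then show "R * cos (atan2 y x) = x" "R * sin (atan2 y x) = y"
    by auto
qed

lemma atan2_cis: "complex_of_real (sqrt (x\<^sup>2 + y\<^sup>2)) * cis (atan2 y x) = Complex x y"
  using atan2_polar[of x y] by (simp add: complex_eq_iff)

lemma gamma5_eq_factor_prod:
  "gamma5 H P t x y = factor_prod H P
     [(True, atan2 y x + pi / 2), (False, - t * sqrt (x\<^sup>2 + y\<^sup>2) / 2), (True, - pi),
      (False, t * sqrt (x\<^sup>2 + y\<^sup>2) / 2), (True, pi / 2 - atan2 y x)]"
  by (simp add: gamma5_def factor_prod_def Let_def matrix_mul_assoc algebra_simps)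

lemma gamma5_eq_phase_product:
  fixes H P :: "complex^'n^'n" and x y :: real
  assumes "H ** H = H" "P ** P = P"
  defines "A \<equiv> atan2 y x" and "R \<equiv> sqrt (x\<^sup>2 + y\<^sup>2)"
  shows "gamma5 H P t x y = phase H (A + pi / 2) ** phase P (t * (- R / 2))
    ** phase H (A - pi / 2 - (A + pi / 2)) ** phase P (t * (R / 2)) ** phase H (- (A - pi / 2))"
proof -
  have minus_i: "- \<i> * complex_of_real a = \<i> * complex_of_real (- a)" for a
    by simp
  show ?thesis
    unfolding gamma5_def Let_def A_def R_def minus_i mexp_eq_phase[OF assms(1)] mexp_eq_phase[OF assms(2)] ..
qed

lemma gamma5_at_0:
  fixes H P :: "complex^'n^'n"
  assumes "H ** H = H" "P ** P = P"
  shows "gamma5 H P 0 x y = mat 1"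
  by (simp add: gamma5_eq_phase_product[OF assms] matrix_mul_assoc[symmetric] phase_add[OF assms(1)])

lemma gamma5_has_derivative:
  fixes H P :: "complex^'n^'n"
  assumes "H ** H = H" "P ** P = P"
  shows "((\<lambda>t. gamma5 H P t x y) has_derivative
    (\<lambda>s. s *\<^sub>R (x *\<^sub>R commutator H P + y *\<^sub>R cscale \<i> (commutator H (commutator H P)))))
    (at 0 within S)"
proof -
  define A R where "A = atan2 y x" and "R = sqrt (x\<^sup>2 + y\<^sup>2)"
  have polar: "complex_of_real R * cis A = Complex x y"
    unfolding A_def R_def by (rule atan2_cis)
  then have polar_cnj: "complex_of_real R * cis (- A) = cnj (Complex x y)"
    by (metis cis_cnj complex_cnj_complex_of_real complex_cnj_mult)
  have "cscale (\<i> * complex_of_real (- R / 2)) (phase H (A + pi / 2) ** P ** phase H (- (A + pi / 2)))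
      + cscale (\<i> * complex_of_real (R / 2)) (phase H (A - pi / 2) ** P ** phase H (- (A - pi / 2)))
      = x *\<^sub>R commutator H P + y *\<^sub>R cscale \<i> (commutator H (commutator H P))"
    unfolding commutator_commutator_idempotent[OF assms(1)]
    unfolding phase_conjugate_quarter_turns polar polar_cnj cscale_conjugate_pair
      commutator_eq_off_diagonal_diff[of H P] ..
  with has_derivative_phase_product[OF assms(1), of "A + pi / 2" P "- R / 2" "A - pi / 2" "R / 2" S]
  show ?thesis
    unfolding gamma5_eq_phase_product[OF assms] A_def R_def by simp
qed

lemma ketbra_idempotent:
  assumes "norm v = 1"
  shows "ketbra v ** ketbra v = ketbra v"
proof -
  have "(\<Sum>k\<in>UNIV. (cmod (v $ k))\<^sup>2) = 1"
    using assms by (simp add: norm_vec_def L2_set_def)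
  moreover have "(\<Sum>k\<in>UNIV. cnj (v $ k) * v $ k) = complex_of_real (\<Sum>k\<in>UNIV. (cmod (v $ k))\<^sup>2)"
    unfolding of_real_sum complex_norm_square by (simp add: mult.commute)
  ultimately have "(\<Sum>k\<in>UNIV. cnj (v $ k) * v $ k) = 1"
    by simp
  moreover have "(\<Sum>k\<in>UNIV. (v $ i * cnj (v $ k)) * (v $ k * cnj (v $ j)))
      = v $ i * cnj (v $ j) * (\<Sum>k\<in>UNIV. cnj (v $ k) * v $ k)" for i j
    by (simp add: sum_distrib_left mult_ac)
  ultimately show ?thesis
    by (simp add: vec_eq_iff ketbra_def matrix_matrix_mult_def)
qed

lemma has_derivative_matrix_mult_right:
  fixes f :: "real \<Rightarrow> complex^'n^'m" and U :: "complex^'p^'n"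
  assumes "(f has_derivative (\<lambda>s. s *\<^sub>R D)) F"
  shows "((\<lambda>t. f t ** U) has_derivative (\<lambda>s. s *\<^sub>R (D ** U))) F"
  using bounded_linear.has_derivative[OF bounded_bilinear.bounded_linear_left[OF bounded_bilinear_matrix_mult] assms]
  by (simp add: scalar_matrix_assoc)

theorem theorem5p3:
  fixes H :: "complex^'n^'n" and v :: "complex^'n" and U :: "complex^'n^'n" and x y :: real
  assumes "orth_projector H"
    and "norm v = 1"
    and "unitary U"
  defines "P \<equiv> ketbra v"
  defines "X0 \<equiv> commutator H P"
  defines "Y0 \<equiv> cscale \<i> (commutator H X0)"
  defines "\<eta> \<equiv> (x *\<^sub>R X0 + y *\<^sub>R Y0) ** U"
  shows "(\<forall>t\<ge>0. \<exists>fs. gamma5 H P t x y = factor_prod H P fs)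
    \<and> gamma5 H P 0 x y = mat 1
    \<and> ((\<lambda>t. gamma5 H P t x y) has_derivative (\<lambda>s. s *\<^sub>R (x *\<^sub>R X0 + y *\<^sub>R Y0))) (at 0 within {0..})
    \<and> retr5 H P U 0 x y = U
    \<and> ((\<lambda>t. retr5 H P U t x y) has_derivative (\<lambda>s. s *\<^sub>R \<eta>)) (at 0 within {0..})"
proof -
  have HH: "H ** H = H"
    using assms(1) by (simp add: orth_projector_def)
  have PP: "P ** P = P"
    unfolding P_def using assms(2) by (rule ketbra_idempotent)
  have gamma_deriv: "((\<lambda>t. gamma5 H P t x y) has_derivative (\<lambda>s. s *\<^sub>R (x *\<^sub>R X0 + y *\<^sub>R Y0)))
      (at 0 within {0..})"
    unfolding X0_def Y0_def using HH PP by (rule gamma5_has_derivative)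
  then have "((\<lambda>t. retr5 H P U t x y) has_derivative (\<lambda>s. s *\<^sub>R \<eta>)) (at 0 within {0..})"
    unfolding retr5_def \<eta>_def by (rule has_derivative_matrix_mult_right)
  moreover have "\<forall>t\<ge>0. \<exists>fs. gamma5 H P t x y = factor_prod H P fs"
    using gamma5_eq_factor_prod by blast
  ultimately show ?thesis
    using gamma5_at_0[OF HH PP] gamma_deriv by (simp add: retr5_def)
qed

end
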